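(* There exists a continuous, $2$-periodic matrix function $A:\mathbb{R}\to\mathbb{R}^{2\times 2}$ such that for every $t\in\mathbb{R}$ the off-diagonal entries of $A(t)$ are positive and the larger (principal) eigenvalue of $A(t)$ equals $-\tfrac12$, and yet the system $x'=A(t)x$ has a solution $x(t)$ with $\|x(2n)\|\to\infty$ as $n\to\infty$ ($n\in\mathbb{N}$).
   Context: A $2\times2$ real matrix with positive off-diagonal entries has two distinct real eigenvalues; the larger is called its principal eigenvalue. $\|\cdot\|$ denotes the Euclidean norm on $\mathbb{R}^2$. *)

theory Defs
  imports "HOL-Analysis.Analysis"
begin

definition real_eigenvalues :: "real^2^2 \<Rightarrow> real set" where
  "real_eigenvalues M = {l. \<exists>v. v \<noteq> 0 \<and> M *v v = l *\<^sub>R v}"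

definition principal_eigenvalue :: "real^2^2 \<Rightarrow> real" where
  "principal_eigenvalue M = Max (real_eigenvalues M)"

end

theory Submission
  imports Defs
begin

text \<open>
  Each A(t) is a rank-one update -1/2 I + u w^T of a scalar matrix; its eigenvalues are -1/2
  (eigenvector orthogonal to w) and -1/2 + w \<bullet> u (eigenvector u), so w \<bullet> u \<le> 0 pins the
  principal eigenvalue at -1/2. The vectors u(t) and w(t) are reverse-engineered from the
  prescribed curve x(t) = exp (g t) (1, exp (r t)), with g t = (pi - 1/2) t - 8 cos (pi t) and
  r = log (x_2 / x_1), so that x' = A x. The eigenvectors rotate with t, so the eigenvalue bound
  does not control growth: x(2n) grows like exp ((2 pi - 1) n).
\<close>

definition outer_prod :: "'a::times^'n \<Rightarrow> 'a^'m \<Rightarrow> 'a^'m^'n" where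
  "outer_prod u w = (\<chi> i j. u$i * w$j)"

lemma rank_one_update_mult:
  fixes u w v :: "real^'n"
  shows "(c *\<^sub>R mat 1 + outer_prod u w) *v v = c *\<^sub>R v + (w \<bullet> v) *\<^sub>R u"
proof -
  have "outer_prod u w *v v = (w \<bullet> v) *\<^sub>R u"
    by (simp add: vec_eq_iff matrix_vector_mult_def outer_prod_def inner_vec_def
        sum_distrib_left mult_ac)
  then show ?thesis
    by (simp add: matrix_vector_mult_add_rdistrib flip: scaleR_matrix_vector_assoc)
qed

lemma real_eigenvalues_rank_one_update:
  "real_eigenvalues (c *\<^sub>R mat 1 + outer_prod u w) = {c, c + w \<bullet> u}"
  (is "real_eigenvalues ?M = _")
proof (intro equalityI subsetI)
  fix l assume "l \<in> real_eigenvalues ?M"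
  then obtain v where "v \<noteq> 0" and "?M *v v = l *\<^sub>R v"
    by (auto simp: real_eigenvalues_def)
  then have "l *\<^sub>R v = c *\<^sub>R v + (w \<bullet> v) *\<^sub>R u"
    by (simp add: rank_one_update_mult)
  then have eq: "(l - c) *\<^sub>R v = (w \<bullet> v) *\<^sub>R u"
    by (simp add: algebra_simps)
  show "l \<in> {c, c + w \<bullet> u}"
  proof (cases "l = c")
    case False
    have "w \<bullet> v \<noteq> 0"
      using eq False \<open>v \<noteq> 0\<close> by auto
    moreover have "(l - c) * (w \<bullet> v) = (w \<bullet> v) * (w \<bullet> u)"
      using arg_cong[OF eq, of "inner w"] by simp
    ultimately show ?thesis by simp
  qed simp
next
  fix l assume l: "l \<in> {c, c + w \<bullet> u}"
  define v :: "real^2" where "v = (if w = 0 then axis 1 1 else vector [- w$2, w$1])"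
  have "v \<noteq> 0" "w \<bullet> v = 0"
    by (auto simp: v_def vec_eq_iff forall_2 inner_vec_def sum_2 axis_def)
  then have c: "c \<in> real_eigenvalues ?M"
    unfolding real_eigenvalues_def by (auto simp: rank_one_update_mult intro!: exI[of _ v])
  show "l \<in> real_eigenvalues ?M"
  proof (cases "u = 0")
    case True
    with l c show ?thesis by simp
  next
    case False
    have "?M *v u = (c + w \<bullet> u) *\<^sub>R u"
      by (simp add: rank_one_update_mult scaleR_add_left)
    with False l c show ?thesis unfolding real_eigenvalues_def by auto
  qed
qed

lemma principal_eigenvalue_rank_one_update:
  assumes "w \<bullet> u \<le> 0"
  shows "principal_eigenvalue (c *\<^sub>R mat 1 + outer_prod u w) = c"
  using assms by (simp add: principal_eigenvalue_def real_eigenvalues_rank_one_update)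

lemma rank_one_update_off_diagonal:
  "i \<noteq> j \<Longrightarrow> (c *\<^sub>R mat 1 + outer_prod u w) $ i $ j = u$i * w$j"
  by (simp add: mat_def outer_prod_def)

lemma vector_2_eq_axis: "vector [a, b] = a *\<^sub>R axis 1 1 + b *\<^sub>R (axis 2 1 :: real^2)"
  by (simp add: vec_eq_iff forall_2 axis_def)

lemma has_vector_derivative_vector_2:
  assumes "(f has_real_derivative f') (at t)" and "(g has_real_derivative g') (at t)"
  shows "((\<lambda>t. vector [f t, g t] :: real^2) has_vector_derivative vector [f', g']) (at t)"
  unfolding vector_2_eq_axis by (auto intro!: derivative_eq_intros assms)

lemma continuous_on_vector_2:
  assumes "continuous_on S f" and "continuous_on S g"
  shows "continuous_on S (\<lambda>t. vector [f t, g t] :: real^2)"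
  unfolding vector_2_eq_axis by (intro continuous_intros assms)

lemma continuous_on_outer_prod:
  fixes u :: "'a::topological_space \<Rightarrow> real^'n" and w :: "'a \<Rightarrow> real^'m"
  assumes "continuous_on S u" and "continuous_on S w"
  shows "continuous_on S (\<lambda>t. outer_prod (u t) (w t))"
  unfolding outer_prod_def
  by (intro continuous_on_vec_lambda continuous_intros continuous_on_component assms)

definition example_rate :: real where
  "example_rate = pi - 1/2"

definition example_log :: "real \<Rightarrow> real" where
  "example_log t = example_rate * t - 8 * cos (pi * t)"

definition example_log_ratio :: "real \<Rightarrow> real" where
  "example_log_ratio t = cos (pi * t) * (31/2 - 2 * sin (pi * t))"

definition example_solution :: "real \<Rightarrow> real^2" where
  "example_solution t =
     vector [exp (example_log t), exp (example_log t + example_log_ratio t)]"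

definition example_u :: "real \<Rightarrow> real^2" where
  "example_u t = vector [1, - (1 - sin (pi * t) / 2) * exp (example_log_ratio t)]"

definition example_w :: "real \<Rightarrow> real^2" where
  "example_w t = vector [- pi * (9 - 8 * sin (pi * t)), 10 * pi * exp (- example_log_ratio t)]"

definition example_matrix :: "real \<Rightarrow> real^2^2" where
  "example_matrix t = (- 1/2) *\<^sub>R mat 1 + outer_prod (example_u t) (example_w t)"

lemma sin_cos_pi_plus_2: "sin (pi * (t + 2)) = sin (pi * t)" "cos (pi * (t + 2)) = cos (pi * t)"
  by (simp_all add: distrib_left mult.commute[of pi 2])

lemma example_matrix_periodic: "example_matrix (t + 2) = example_matrix t"
  by (simp add: example_matrix_def example_u_def example_w_def example_log_ratio_def
      sin_cos_pi_plus_2)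

lemma continuous_on_example_matrix: "continuous_on UNIV example_matrix"
proof -
  have "continuous_on UNIV example_u" "continuous_on UNIV example_w"
    unfolding example_u_def[abs_def] example_w_def[abs_def] example_log_ratio_def
    by (intro continuous_on_vector_2 continuous_intros; simp)+
  then show ?thesis
    unfolding example_matrix_def[abs_def]
    by (intro continuous_on_add continuous_on_const continuous_on_outer_prod)
qed

lemma example_coefficients_pos: "0 < pi * (9 - 8 * sin (pi * t))" "0 < 1 - sin (pi * t) / 2"
  using sin_le_one[of "pi * t"] by (auto intro!: mult_pos_pos simp del: sin_le_one)

lemma example_matrix_off_diagonal_pos:
  assumes "i \<noteq> j" shows "example_matrix t $ i $ j > 0"
proof -
  have "example_matrix t $ i $ j = example_u t $ i * example_w t $ j"
    unfolding example_matrix_def using assms by (rule rank_one_update_off_diagonal)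
  moreover have "(i, j) = (1, 2) \<or> (i, j) = (2, 1)"
    using assms exhaust_2[of i] exhaust_2[of j] by auto
  ultimately show ?thesis
    using example_coefficients_pos[of t]
    by (auto simp: example_u_def example_w_def intro!: mult_neg_pos)
qed

lemma example_principal_eigenvalue: "principal_eigenvalue (example_matrix t) = - 1/2"
  unfolding example_matrix_def
proof (rule principal_eigenvalue_rank_one_update)
  have "example_w t \<bullet> example_u t = - pi * (9 - 8 * sin (pi * t)) - 10 * pi * (1 - sin (pi * t) / 2)"
    by (simp add: example_u_def example_w_def inner_vec_def sum_2 exp_minus field_simps)
  then show "example_w t \<bullet> example_u t \<le> 0"
    using example_coefficients_pos[of t] mult_pos_pos[OF pi_gt_zero, of "1 - sin (pi * t) / 2"]
    by linarith
qed

lemma example_log_deriv: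
  "(example_log has_real_derivative example_rate + 8 * pi * sin (pi * t)) (at t)"
  unfolding example_log_def[abs_def] by (auto intro!: derivative_eq_intros)

lemma example_log_ratio_deriv:
  "(example_log_ratio has_real_derivative
     4 * pi * sin (pi * t)^2 - 31/2 * pi * sin (pi * t) - 2 * pi) (at t)"
  unfolding example_log_ratio_def[abs_def]
  by (auto intro!: derivative_eq_intros) (use sin_cos_squared_add3[of "pi * t"] in algebra)

lemma example_solution_solves:
  "(example_solution has_vector_derivative (example_matrix t *v example_solution t)) (at t)"
proof -
  define s where "s = sin (pi * t)"
  define g where "g = example_log t"
  define r where "r = example_log_ratio t"
  define g' where "g' = example_rate + 8 * pi * s"
  define r' where "r' = 4 * pi * s^2 - 31/2 * pi * s - 2 * pi"
  have deriv: "(example_solution has_vector_derivative vector [g' * exp g, (g' + r') * exp (g + r)]) (at t)"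
    unfolding example_solution_def[abs_def] g'_def r'_def g_def r_def s_def
    by (intro has_vector_derivative_vector_2)
      (auto intro!: derivative_eq_intros example_log_deriv example_log_ratio_deriv)
  have "example_w t \<bullet> example_solution t = pi * (1 + 8 * s) * exp g"
    by (simp add: example_w_def example_solution_def inner_vec_def sum_2 exp_add exp_minus
        s_def g_def r_def field_simps)
  then have "example_matrix t *v example_solution t
      = (- 1/2) *\<^sub>R example_solution t + (pi * (1 + 8 * s) * exp g) *\<^sub>R example_u t"
    unfolding example_matrix_def rank_one_update_mult by (simp only:)
  also have "\<dots> = vector [g' * exp g, (g' + r') * exp (g + r)]"
    unfolding vec_eq_iff forall_2
    by (simp add: example_u_def example_solution_def exp_add flip: s_def g_def r_def)
      (simp add: g'_def r'_def example_rate_def power2_eq_square algebra_simps)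
  finally show ?thesis using deriv by simp
qed

lemma example_solution_grows:
  "filterlim (\<lambda>n::nat. norm (example_solution (2 * real n))) at_top sequentially"
proof (rule filterlim_at_top_mono)
  have "example_log (2 * real n) = - 8 + 2 * example_rate * real n" for n
    using cos_2npi[of n] by (simp add: example_log_def mult_ac)
  moreover have "filterlim (\<lambda>n. 2 * example_rate * real n) at_top sequentially"
    using pi_gt3 filterlim_real_sequentially
    by (intro filterlim_tendsto_pos_mult_at_top[OF tendsto_const]) (simp_all add: example_rate_def)
  then have "filterlim (\<lambda>n. - 8 + 2 * example_rate * real n) at_top sequentially"
    by (rule filterlim_tendsto_add_at_top[OF tendsto_const])
  ultimately show "filterlim (\<lambda>n. exp (example_log (2 * real n))) at_top sequentially"
    by (simp add: filterlim_compose[OF exp_at_top])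
  show "\<forall>\<^sub>F n in sequentially. exp (example_log (2 * real n)) \<le> norm (example_solution (2 * real n))"
    using component_le_norm_cart[of "example_solution _" 1] by (simp add: example_solution_def)
qed

theorem mainTheorem2:
  shows "\<exists>A :: real \<Rightarrow> real^2^2.
     continuous_on UNIV A \<and>
     (\<forall>t. A (t + 2) = A t) \<and>
     (\<forall>t. \<forall>i j. i \<noteq> j \<longrightarrow> A t $ i $ j > 0) \<and>
     (\<forall>t. principal_eigenvalue (A t) = - 1 / 2) \<and>
     (\<exists>x :: real \<Rightarrow> real^2.
        (\<forall>t. (x has_vector_derivative (A t *v x t)) (at t)) \<and>
        filterlim (\<lambda>n::nat. norm (x (2 * real n))) at_top sequentially)"
  using continuous_on_example_matrix example_matrix_periodic example_matrix_off_diagonal_pos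
    example_principal_eigenvalue example_solution_solves example_solution_grows
  by blast

end
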